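(* Let $(X,d,\mu)$, $p$, $\underline{Q}_\mu$ be as in the context, and let $S^1\in\mathcal{ADR}_0(X)$ be a closed set. Then for each $c\ge1$ there is a constant $C>0$ such that whenever $\{B_{r_i}(x_i)\}_{i=1}^{M}$, $M\in\mathbb N$, is an $(S^1,c)$-nice family with $\max_i 4cr_i\le1$, then for every $f\in L^{loc}_1(\mu\lfloor_{S^1})$, $$\sum_{i=1}^{M}\frac{\mu(B_{r_i}(x_i))}{r_i^p}\Big(\mathcal E_{\mu\lfloor_{S^1}}(f,B_{2cr_i}(x_i))\Big)^p\le C\int_{S^1}(f^\sharp_{\mu\lfloor_{S^1}}(x))^p\,d\mu(x).$$
   Context: Standing setting: $(X,d)$ complete separable metric space, $\mu$ a Borel regular locally finite outer measure, $\operatorname{supp}\mu=X$, uniformly locally doubling (for every $R>0$, $\sup_{r\in(0,R]}\sup_x\mu(B_{2r}(x))/\mu(B_r(x))<\infty$). Balls are closed, $B_r(x)=\{y:d(x,y)\le r\}$. A fixed $p\in(1,\infty)$; $X$ supports a weak local $(1,p)$-Poincaré inequality (for every $R>0$ there are $C,\lambda\ge1$ with $\inf_c\frac{1}{\mu(B_r(x))}\int_{B_r(x)}|f-c|d\mu\le Cr(\frac{1}{\mu(B_{\lambda r}(x))}\int_{B_{\lambda r}(x)}(\operatorname{lip}f)^pd\mu)^{1/p}$ for Lipschitz $f$, $x\in X$, $r\in(0,R]$). Notation: $\mathcal E_{\mathfrak m}(g,G):=\inf_{c\in\mathbb R}\mathfrak m(G)^{-1}\int_G|g-c|d\mathfrak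 m$ if $\mathfrak m(G)>0$, $0$ if $\mathfrak m(G)=0$; $\mathfrak m\lfloor_S(E)=\mathfrak m(E\cap S)$. $\mathcal H_{0,\delta}(E):=\inf\{\sum\mu(B_{r_i}(x_i)):E\subset\bigcup B_{r_i}(x_i),0<r_i<\delta\}$, $\mathcal H_0=\lim_{\delta\to0}\mathcal H_{0,\delta}$. $S^1\in\mathcal{ADR}_0(X)$ means $S^1$ is closed and there are $\varkappa_1,\varkappa_2>0$ with $\varkappa_1\mu(B_r(x))\le\mathcal H_0(B_r(x)\cap S^1)\le\varkappa_2\mu(B_r(x))$ for $x\in S^1$, $r\in(0,1]$. A finite family of closed balls $\{B_{r_i}(x_i)\}$ is $(S^1,c)$-nice if the balls are pairwise disjoint, $\max_ir_i\le1$, and $B_{cr_i}(x_i)\cap S^1\ne\emptyset$ for all $i$. Maximal function: $f^\sharp_{\mu\lfloor_{S^1}}(x):=\sup_{r\in(0,2]}\frac1r\mathcal E_{\mu\lfloor_{S^1}}(f,B_r(x))$. *)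

theory Defs
  imports "HOL-Analysis.Analysis"
begin

definition pow_enn :: "real \<Rightarrow> ennreal \<Rightarrow> ennreal" where
  "pow_enn q t = (if t = \<infinity> then \<infinity> else ennreal (enn2real t powr q))"

definition mrestr :: "'a measure \<Rightarrow> 'a set \<Rightarrow> 'a measure" where
  "mrestr m S = density m (indicator S)"

definition mean_osc :: "'a measure \<Rightarrow> ('a \<Rightarrow> real) \<Rightarrow> 'a set \<Rightarrow> ennreal" where
  "mean_osc m g G =
     (if emeasure m G = 0 then 0
      else (INF c::real. (\<integral>\<^sup>+ y. ennreal \<bar>g y - c\<bar> * indicator G y \<partial>m) / emeasure m G))"

definition sharp_max :: "'a measure \<Rightarrow> ('a::metric_space \<Rightarrow> real) \<Rightarrow> 'a \<Rightarrow> ennreal" where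
  "sharp_max m f x = (SUP r\<in>{0<..2::real}. mean_osc m f (cball x r) / ennreal r)"

definition lip :: "('a::metric_space \<Rightarrow> real) \<Rightarrow> 'a \<Rightarrow> ennreal" where
  "lip f x = Liminf (at_right (0::real))
     (\<lambda>r. SUP y\<in>cball x r. ennreal (\<bar>f y - f x\<bar> / r))"

definition H0_delta :: "'a measure \<Rightarrow> real \<Rightarrow> 'a::metric_space set \<Rightarrow> ennreal" where
  "H0_delta m \<delta> E = (INF cov \<in> {(I, xs, rs). I \<subseteq> (UNIV::nat set)
        \<and> (\<forall>i\<in>I. 0 < rs i \<and> rs i < \<delta>) \<and> E \<subseteq> (\<Union>i\<in>I. cball (xs i) (rs i))}.
      case cov of (I, xs, rs) \<Rightarrow>
        (\<Sum>i. (if i \<in> I then emeasure m (cball (xs i) (rs i)) else 0)))"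

text \<open>H_0 = lim_{delta -> 0} H_{0,delta}; H_{0,delta} is nonincreasing in delta, so this is a supremum.\<close>
definition H0 :: "'a measure \<Rightarrow> 'a::metric_space set \<Rightarrow> ennreal" where
  "H0 m E = (SUP \<delta>\<in>{0<..}. H0_delta m \<delta> E)"

definition ADR0 :: "'a measure \<Rightarrow> 'a::metric_space set \<Rightarrow> bool" where
  "ADR0 m S \<longleftrightarrow> closed S \<and> (\<exists>k1 k2::real. k1 > 0 \<and> k2 > 0 \<and>
     (\<forall>x\<in>S. \<forall>r\<in>{0<..1}.
        ennreal k1 * emeasure m (cball x r) \<le> H0 m (cball x r \<inter> S)
      \<and> H0 m (cball x r \<inter> S) \<le> ennreal k2 * emeasure m (cball x r)))"

definition nice_family :: "'a::metric_space set \<Rightarrow> real \<Rightarrow> nat \<Rightarrow> (nat \<Rightarrow> 'a) \<Rightarrow> (nat \<Rightarrow> real) \<Rightarrow> bool" where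
  "nice_family S c M xs rs \<longleftrightarrow>
     (\<forall>i<M. 0 < rs i \<and> rs i \<le> 1 \<and> cball (xs i) (c * rs i) \<inter> S \<noteq> {})
   \<and> (\<forall>i<M. \<forall>j<M. i \<noteq> j \<longrightarrow> cball (xs i) (rs i) \<inter> cball (xs j) (rs j) = {})"

definition loc_integrable :: "'a::metric_space measure \<Rightarrow> ('a \<Rightarrow> real) \<Rightarrow> bool" where
  "loc_integrable m f \<longleftrightarrow> (\<forall>K. compact K \<longrightarrow> set_integrable m K f)"

definition standing_setting :: "'a::polish_space measure \<Rightarrow> real \<Rightarrow> bool" where
  "standing_setting m p \<longleftrightarrow>
     sets m = sets borel \<and>
     (\<forall>x. \<exists>r>0. emeasure m (cball x r) < \<infinity>) \<and>
     (\<forall>U. open U \<and> U \<noteq> {} \<longrightarrow> emeasure m U > 0) \<and>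
     (\<forall>R>0. \<exists>D::real. \<forall>r\<in>{0<..R}. \<forall>x.
         emeasure m (cball x (2*r)) \<le> ennreal D * emeasure m (cball x r)) \<and>
     1 < p \<and>
     (\<forall>R>0. \<exists>C lam::real. C \<ge> 1 \<and> lam \<ge> 1 \<and>
        (\<forall>f::'a \<Rightarrow> real. (\<exists>L. L-lipschitz_on UNIV f) \<longrightarrow>
          (\<forall>x. \<forall>r\<in>{0<..R}.
             mean_osc m f (cball x r) \<le> ennreal (C * r) *
               pow_enn (1/p) ((\<integral>\<^sup>+ y. pow_enn p (lip f y) * indicator (cball x (lam*r)) y \<partial>m)
                               / emeasure m (cball x (lam*r))))))"

end

theory Submission
  imports Defs
begin

text \<open>
  Choose y_i in S1 with d(x_i, y_i) <= c r_i and let A_i = B(y_i, r_i) \<inter> S1. For z in A_i the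
  ball B(x_i, 2c r_i) contains A_i and lies in B(z, 4c r_i). The lower ADR bound, combined with
  H_0(K) <= D \<mu>(K) for closed bounded K (cover K by a maximal separated net), gives
  \<mu>(B(y, r)) <= L \<mu>(B(y, r) \<inter> S1) for y in S1. With doubling, the two balls therefore have
  comparable \<mu>|S1-measure, so the mean oscillation over B(x_i, 2c r_i) is at most a constant
  times r_i f#(z) for every z in A_i, and the i-th term is at most C \<mu>(B(x_i, r_i)) inf_{A_i} (f#)^p.
  The A_i may overlap, but selecting balls by decreasing radius (as in Vitali's covering lemma)
  gives the packing bound sum_{i in J} \<mu>(B(x_i, r_i)) <= \<Lambda> \<mu>(\<Union>_{i in J} A_i) for every J,
  and a discrete layer-cake argument turns this into the integral bound.
\<close>

section \<open>Mean oscillation and the sharp maximal function\<close>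

lemma cball_subset_cball_dist:
  fixes x y :: "'a::metric_space"
  assumes "dist x y + r \<le> s"
  shows "cball y r \<subseteq> cball x s"
  unfolding subset_iff mem_cball using assms by (meson add_left_mono dist_triangle order_trans)

lemma pow_enn_mono:
  assumes "p > 0" "s \<le> t"
  shows "pow_enn p s \<le> pow_enn p t"
proof (cases "t = \<infinity>")
  case False
  then have "s \<noteq> \<infinity>" "enn2real s \<le> enn2real t"
    using assms(2) by (auto simp: top_unique enn2real_mono top.not_eq_extremum)
  then show ?thesis using False assms(1)
    by (auto simp: pow_enn_def intro!: ennreal_leI powr_mono2)
qed (simp add: pow_enn_def)

lemma pow_enn_mult:
  assumes "p > 0" "a \<ge> 0"
  shows "pow_enn p (ennreal a * t) = ennreal (a powr p) * pow_enn p t"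
proof (cases "t = \<infinity>")
  case True
  then show ?thesis
    using assms by (cases "a = 0") (simp_all add: pow_enn_def ennreal_mult_top)
next
  case False
  then have "ennreal a * t \<noteq> \<infinity>" by (simp add: ennreal_mult_eq_top_iff)
  moreover have "enn2real (ennreal a * t) = a * enn2real t" using assms by (simp add: enn2real_mult)
  ultimately show ?thesis using False assms
    by (simp add: pow_enn_def powr_mult ennreal_mult[symmetric])
qed

lemma ennreal_le_mult_INF:
  fixes a k :: ennreal
  assumes "I \<noteq> {}" "k < \<infinity>" "\<And>i. i \<in> I \<Longrightarrow> a \<le> k * f i"
  shows "a \<le> k * (INF i\<in>I. f i)"
proof (cases "k = 0")
  case False
  then have "a / k \<le> (INF i\<in>I. f i)"
    using assms(3) by (intro INF_greatest divide_le_posI_ennreal) (auto simp: zero_less_iff_neq_zero)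
  then have "k * (a / k) \<le> k * (INF i\<in>I. f i)" by (rule mult_left_mono) auto
  then show ?thesis
    using False assms(2) by (simp add: ennreal_times_divide ennreal_mult_divide_eq mult.commute)
qed (use assms in auto)

lemma sets_mrestr [simp]: "sets (mrestr \<mu> S) = sets \<mu>"
  by (simp add: mrestr_def)

lemma emeasure_mrestr:
  assumes "S \<in> sets \<mu>" "A \<in> sets \<mu>"
  shows "emeasure (mrestr \<mu> S) A = emeasure \<mu> (A \<inter> S)"
proof -
  have "emeasure (mrestr \<mu> S) A = (\<integral>\<^sup>+ x. indicator S x * indicator A x \<partial>\<mu>)"
    unfolding mrestr_def using assms by (simp add: emeasure_density)
  also have "\<dots> = (\<integral>\<^sup>+ x. indicator (A \<inter> S) x \<partial>\<mu>)"
    by (intro nn_integral_cong) (simp split: split_indicator)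
  finally show ?thesis using assms by simp
qed

lemma mean_osc_le_mult_mean_osc_superset:
  assumes "G \<subseteq> H" "G \<in> sets \<nu>" "H \<in> sets \<nu>"
    and pos: "emeasure \<nu> G > 0" and fin: "emeasure \<nu> H < \<infinity>"
    and comparable: "emeasure \<nu> H \<le> ennreal L * emeasure \<nu> G"
  shows "mean_osc \<nu> f G \<le> ennreal L * mean_osc \<nu> f H"
proof -
  have "emeasure \<nu> G \<le> emeasure \<nu> H" using assms by (intro emeasure_mono)
  then have posH: "emeasure \<nu> H > 0" and finG: "emeasure \<nu> G < \<infinity>" using pos fin by auto
  define F where "F E c = (\<integral>\<^sup>+ y. ennreal \<bar>f y - c\<bar> * indicator E y \<partial>\<nu>)" for E c
  have "F G c / emeasure \<nu> G \<le> ennreal L * (F H c / emeasure \<nu> H)" for c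
  proof -
    have "F G c \<le> F H c" unfolding F_def
      using \<open>G \<subseteq> H\<close> by (intro nn_integral_mono) (auto intro!: mult_left_mono simp: indicator_def)
    also have "\<dots> = F H c / emeasure \<nu> H * emeasure \<nu> H"
      using posH fin by (simp add: ennreal_divide_times)
    also have "\<dots> \<le> F H c / emeasure \<nu> H * (ennreal L * emeasure \<nu> G)"
      by (intro mult_left_mono comparable) auto
    finally have "F G c \<le> ennreal L * (F H c / emeasure \<nu> H) * emeasure \<nu> G"
      by (simp add: ac_simps)
    then show ?thesis using pos finG by (metis divide_le_posI_ennreal mult.commute)
  qed
  then have "(INF c. F G c / emeasure \<nu> G) \<le> ennreal L * (INF c. F H c / emeasure \<nu> H)"
    by (intro ennreal_le_mult_INF) (auto intro: INF_lower2)
  then show ?thesis using pos posH unfolding mean_osc_def F_def by auto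
qed

lemma mean_osc_le_sharp_max:
  assumes "0 < r" "r \<le> 2"
  shows "mean_osc m f (cball z r) \<le> ennreal r * sharp_max m f z"
proof -
  have "mean_osc m f (cball z r) / ennreal r \<le> sharp_max m f z"
    unfolding sharp_max_def using assms by (intro SUP_upper) auto
  then have "mean_osc m f (cball z r) * (ennreal r / ennreal r) \<le> sharp_max m f z * ennreal r"
    by (metis ennreal_divide_times mult_right_mono zero_le)
  then show ?thesis
    using assms by (simp add: divide_ennreal mult.commute)
qed

lemma mean_osc_le_sharp_max_nearby:
  fixes \<mu> :: "'a::metric_space measure"
  assumes sets: "\<And>x r. cball x r \<in> sets \<mu>" "S \<in> sets \<mu>"
    and near: "dist x y \<le> c * r" "dist y z \<le> r"
    and "0 < r" "1 \<le> c" "4 * c * r \<le> 2"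
    and fin: "emeasure \<mu> (cball y ((4*c+1) * r)) < \<infinity>"
    and pos: "emeasure \<mu> (cball y r \<inter> S) > 0"
    and comparable: "emeasure \<mu> (cball y ((4*c+1) * r)) \<le> ennreal \<Lambda> * emeasure \<mu> (cball y r \<inter> S)"
    and "0 \<le> \<Lambda>"
  shows "mean_osc (mrestr \<mu> S) f (cball x (2*c*r)) \<le> ennreal (4*c*\<Lambda>*r) * sharp_max (mrestr \<mu> S) f z"
proof -
  define \<nu> where "\<nu> = mrestr \<mu> S"
  define G where "G = cball x (2*c*r)"
  define H where "H = cball z (4*c*r)"
  have \<nu>: "emeasure \<nu> E = emeasure \<mu> (E \<inter> S)" if "E \<in> sets \<mu>" for E
    unfolding \<nu>_def using emeasure_mrestr[OF sets(2) that] .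
  have G_sets: "G \<in> sets \<mu>" and H_sets: "H \<in> sets \<mu>"
    unfolding G_def H_def using sets by auto
  have r_le: "r \<le> c * r" using \<open>1 \<le> c\<close> \<open>0 < r\<close> by simp
  have "dist z x \<le> r + c * r"
    using dist_triangle[of z x y] near by (simp add: dist_commute)
  then have "G \<subseteq> H" unfolding G_def H_def using r_le
    by (intro cball_subset_cball_dist) (simp add: algebra_simps)
  have "cball y r \<subseteq> G" unfolding G_def using near r_le
    by (intro cball_subset_cball_dist) (simp add: algebra_simps)
  then have "emeasure \<mu> (cball y r \<inter> S) \<le> emeasure \<nu> G"
    unfolding \<nu>[OF G_sets] using G_sets sets by (intro emeasure_mono) auto
  then have G_pos: "emeasure \<nu> G > 0" using pos by simp
  have "H \<subseteq> cball y ((4*c+1) * r)" unfolding H_def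
    using near by (intro cball_subset_cball_dist) (simp add: algebra_simps)
  then have H_le: "emeasure \<nu> H \<le> emeasure \<mu> (cball y ((4*c+1) * r))"
    unfolding \<nu>[OF H_sets] using H_sets sets by (intro emeasure_mono) auto
  then have "emeasure \<nu> H \<le> ennreal \<Lambda> * emeasure \<nu> G"
    using comparable \<open>emeasure \<mu> (cball y r \<inter> S) \<le> emeasure \<nu> G\<close>
    by (meson order_trans mult_left_mono zero_le)
  then have "mean_osc \<nu> f G \<le> ennreal \<Lambda> * mean_osc \<nu> f H"
    using \<open>G \<subseteq> H\<close> G_pos H_le fin G_sets H_sets
    by (intro mean_osc_le_mult_mean_osc_superset) (auto simp: \<nu>_def)
  also have "\<dots> \<le> ennreal \<Lambda> * (ennreal (4*c*r) * sharp_max \<nu> f z)"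
    unfolding H_def using assms by (intro mult_left_mono mean_osc_le_sharp_max) auto
  also have "\<dots> = ennreal (4*c*\<Lambda>*r) * sharp_max \<nu> f z"
    using assms by (simp add: ennreal_mult' mult.assoc mult.left_commute)
  finally show ?thesis unfolding \<nu>_def G_def .
qed

lemma ball_term_le_INF_sharp_max:
  fixes \<mu> :: "'a::metric_space measure"
  assumes sets: "\<And>x r. cball x r \<in> sets \<mu>" "S \<in> sets \<mu>"
    and near: "dist x y \<le> c * r"
    and "0 < r" "1 \<le> c" "4 * c * r \<le> 2" "0 < p" "0 \<le> \<Lambda>"
    and fin: "emeasure \<mu> (cball x r) < \<infinity>" "emeasure \<mu> (cball y ((4*c+1) * r)) < \<infinity>"
    and pos: "emeasure \<mu> (cball y r \<inter> S) > 0"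
    and comparable: "emeasure \<mu> (cball y ((4*c+1) * r)) \<le> ennreal \<Lambda> * emeasure \<mu> (cball y r \<inter> S)"
  shows "emeasure \<mu> (cball x r) / ennreal (r powr p) * pow_enn p (mean_osc (mrestr \<mu> S) f (cball x (2*c*r)))
    \<le> ennreal ((4*c*\<Lambda>) powr p) * emeasure \<mu> (cball x r)
        * (INF z\<in>cball y r \<inter> S. pow_enn p (sharp_max (mrestr \<mu> S) f z))"
proof (rule ennreal_le_mult_INF)
  show "cball y r \<inter> S \<noteq> {}" using pos by auto
  show "ennreal ((4*c*\<Lambda>) powr p) * emeasure \<mu> (cball x r) < \<infinity>"
    using fin by (simp add: ennreal_mult_less_top)
  fix z assume "z \<in> cball y r \<inter> S"
  then have "dist y z \<le> r" by simp
  have "pow_enn p (mean_osc (mrestr \<mu> S) f (cball x (2*c*r)))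
      \<le> pow_enn p (ennreal (4*c*\<Lambda>*r) * sharp_max (mrestr \<mu> S) f z)"
    using assms \<open>dist y z \<le> r\<close> by (intro pow_enn_mono mean_osc_le_sharp_max_nearby) auto
  also have "\<dots> = ennreal ((4*c*\<Lambda>*r) powr p) * pow_enn p (sharp_max (mrestr \<mu> S) f z)"
    using assms by (intro pow_enn_mult) auto
  also have "(4*c*\<Lambda>*r) powr p = r powr p * (4*c*\<Lambda>) powr p"
    using assms by (simp add: powr_mult)
  also have "ennreal (r powr p * (4*c*\<Lambda>) powr p) * pow_enn p (sharp_max (mrestr \<mu> S) f z)
      = ennreal (r powr p) * (ennreal ((4*c*\<Lambda>) powr p) * pow_enn p (sharp_max (mrestr \<mu> S) f z))"
    by (simp add: ennreal_mult mult.assoc)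
  finally have "emeasure \<mu> (cball x r) / ennreal (r powr p) * pow_enn p (mean_osc (mrestr \<mu> S) f (cball x (2*c*r)))
      \<le> emeasure \<mu> (cball x r) / ennreal (r powr p) * ennreal (r powr p)
         * (ennreal ((4*c*\<Lambda>) powr p) * pow_enn p (sharp_max (mrestr \<mu> S) f z))"
    by (simp add: mult_left_mono mult.assoc)
  also have "emeasure \<mu> (cball x r) / ennreal (r powr p) * ennreal (r powr p) = emeasure \<mu> (cball x r)"
    using \<open>0 < r\<close> by (simp add: ennreal_divide_times divide_ennreal)
  finally show "emeasure \<mu> (cball x r) / ennreal (r powr p) * pow_enn p (mean_osc (mrestr \<mu> S) f (cball x (2*c*r)))
      \<le> ennreal ((4*c*\<Lambda>) powr p) * emeasure \<mu> (cball x r) * pow_enn p (sharp_max (mrestr \<mu> S) f z)"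
    by (simp add: ac_simps)
qed

section \<open>Doubling and the measure of balls\<close>

lemma standing_setting_sets: "standing_setting \<mu> p \<Longrightarrow> sets \<mu> = sets borel"
  unfolding standing_setting_def by blast

lemma standing_setting_closed_sets: "standing_setting \<mu> p \<Longrightarrow> closed S \<Longrightarrow> S \<in> sets \<mu>"
  using standing_setting_sets by (metis borel_closed)

lemma standing_setting_cball_sets: "standing_setting \<mu> p \<Longrightarrow> cball x r \<in> sets \<mu>"
  by (simp add: standing_setting_closed_sets)

lemma standing_setting_doubling:
  assumes "standing_setting \<mu> p" "R > 0"
  obtains D where "D \<ge> 1"
    "\<And>r x. r \<in> {0<..R} \<Longrightarrow> emeasure \<mu> (cball x (2*r)) \<le> ennreal D * emeasure \<mu> (cball x r)"
proof -
  obtain D where D: "\<forall>r\<in>{0<..R}. \<forall>x. emeasure \<mu> (cball x (2*r)) \<le> ennreal D * emeasure \<mu> (cball x r)"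
    using assms unfolding standing_setting_def by meson
  have "emeasure \<mu> (cball x (2*r)) \<le> ennreal (max D 1) * emeasure \<mu> (cball x r)"
    if "r \<in> {0<..R}" for r x
    using D that order_trans[OF _ mult_right_mono[of "ennreal D" "ennreal (max D 1)"]] by fastforce
  then show thesis using that[of "max D 1"] by auto
qed

lemma emeasure_cball_le_doubling_power:
  fixes \<mu> :: "'a::metric_space measure"
  assumes sets: "\<And>x r. cball x r \<in> sets \<mu>"
    and doubling: "\<And>r x. r \<in> {0<..R} \<Longrightarrow> emeasure \<mu> (cball x (2*r)) \<le> ennreal D * emeasure \<mu> (cball x r)"
    and "0 < s" "s \<le> 2^k * r" "s \<le> 2*R"
  shows "emeasure \<mu> (cball x s) \<le> ennreal D ^ k * emeasure \<mu> (cball x r)"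
  using assms(3-)
proof (induction k arbitrary: s)
  case 0
  then show ?case using sets by (auto intro!: emeasure_mono)
next
  case (Suc k)
  have "emeasure \<mu> (cball x s) \<le> ennreal D * emeasure \<mu> (cball x (s/2))"
    using doubling[of "s/2" x] Suc.prems by auto
  also have "\<dots> \<le> ennreal D * (ennreal D ^ k * emeasure \<mu> (cball x r))"
    using Suc.IH[of "s/2"] Suc.prems by (intro mult_left_mono) auto
  finally show ?case by (simp add: mult.assoc)
qed

lemma standing_setting_emeasure_cball_finite:
  assumes ss: "standing_setting \<mu> p"
  shows "emeasure \<mu> (cball x R) < \<infinity>"
proof -
  obtain r where r: "r > 0" "emeasure \<mu> (cball x r) < \<infinity>"
    using ss unfolding standing_setting_def by meson
  show ?thesis
  proof (cases "R \<le> r")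
    case True
    then have "emeasure \<mu> (cball x R) \<le> emeasure \<mu> (cball x r)"
      using standing_setting_cball_sets[OF ss] by (intro emeasure_mono) auto
    then show ?thesis using r by auto
  next
    case False
    then have R: "R > 0" using r by auto
    obtain D where D: "\<And>t y. t \<in> {0<..R} \<Longrightarrow> emeasure \<mu> (cball y (2*t)) \<le> ennreal D * emeasure \<mu> (cball y t)"
      using standing_setting_doubling[OF ss R] by blast
    obtain k where "R / r < 2^k" using real_arch_pow[of 2 "R/r"] by auto
    then have "R \<le> 2^k * r" using r by (simp add: field_simps)
    then have "emeasure \<mu> (cball x R) \<le> ennreal D ^ k * emeasure \<mu> (cball x r)"
      using emeasure_cball_le_doubling_power[OF standing_setting_cball_sets[OF ss] D, where R=R and s=R] R by auto
    also have "\<dots> < \<infinity>"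
      using r by (simp add: ennreal_mult_less_top power_less_top_ennreal)
    finally show ?thesis .
  qed
qed

lemma standing_setting_emeasure_cball_pos:
  assumes ss: "standing_setting \<mu> p" and "r > 0"
  shows "emeasure \<mu> (cball x r) > 0"
proof -
  have "emeasure \<mu> (ball x r) > 0"
    using ss assms(2) unfolding standing_setting_def by auto
  also have "\<dots> \<le> emeasure \<mu> (cball x r)"
    using standing_setting_cball_sets[OF ss] standing_setting_sets[OF ss] by (intro emeasure_mono) auto
  finally show ?thesis .
qed

lemma standing_setting_emeasure_Int_pos:
  assumes ss: "standing_setting \<mu> p" and "0 < r" "r \<le> s"
    and "emeasure \<mu> (cball y s) \<le> ennreal \<Lambda> * emeasure \<mu> (cball y r \<inter> S)"
  shows "0 < emeasure \<mu> (cball y r \<inter> S)"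
proof -
  have "0 < emeasure \<mu> (cball y r)" using standing_setting_emeasure_cball_pos[OF ss \<open>0 < r\<close>] .
  also have "\<dots> \<le> emeasure \<mu> (cball y s)"
    using \<open>r \<le> s\<close> by (intro emeasure_mono subset_cball standing_setting_cball_sets[OF ss])
  also have "\<dots> \<le> ennreal \<Lambda> * emeasure \<mu> (cball y r \<inter> S)" by fact
  finally show ?thesis by (auto simp: zero_less_iff_neq_zero)
qed

section \<open>Separated nets and the lower density of ADR sets\<close>

definition separated :: "real \<Rightarrow> 'a::metric_space set \<Rightarrow> bool" where
  "separated \<rho> F \<longleftrightarrow> (\<forall>x\<in>F. \<forall>x'\<in>F. x \<noteq> x' \<longrightarrow> \<rho> < dist x x')"

lemma separated_insert:
  "separated \<rho> F \<Longrightarrow> (\<And>x. x \<in> F \<Longrightarrow> \<rho> < dist z x) \<Longrightarrow> separated \<rho> (insert z F)"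
  unfolding separated_def by (auto simp: dist_commute)

lemma separated_disjoint_cballs: "separated \<rho> F \<Longrightarrow> disjoint_family_on (\<lambda>x. cball x (\<rho>/2)) F"
  unfolding separated_def disjoint_family_on_def by (auto intro!: disjoint_cballI)

lemma sum_emeasure_separated_cballs:
  assumes "\<And>x r. cball x r \<in> sets \<mu>" "finite F" "separated \<rho> F"
  shows "(\<Sum>x\<in>F. emeasure \<mu> (cball x (\<rho>/2))) = emeasure \<mu> (\<Union>x\<in>F. cball x (\<rho>/2))"
  using assms by (intro sum_emeasure separated_disjoint_cballs) auto

lemma card_separated_mult_emeasure_le:
  fixes \<mu> :: "'a::metric_space measure"
  assumes sets: "\<And>x r. cball x r \<in> sets \<mu>"
    and doubling: "\<And>t x. t \<in> {0<..r} \<Longrightarrow> emeasure \<mu> (cball x (2*t)) \<le> ennreal D * emeasure \<mu> (cball x t)"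
    and "0 < r" "0 < \<rho>" "2*r \<le> 2^k * (\<rho>/2)"
    and F: "finite F" "F \<subseteq> cball y r" "separated \<rho> F"
  shows "of_nat (card F) * emeasure \<mu> (cball y r) \<le> ennreal D ^ k * emeasure \<mu> (cball y (r + \<rho>))"
proof -
  have "emeasure \<mu> (cball y r) \<le> ennreal D ^ k * emeasure \<mu> (cball x (\<rho>/2))" if "x \<in> F" for x
  proof -
    have "emeasure \<mu> (cball y r) \<le> emeasure \<mu> (cball x (2*r))" using F that
      by (intro emeasure_mono cball_subset_cball_dist sets) (auto simp: dist_commute)
    also have "\<dots> \<le> ennreal D ^ k * emeasure \<mu> (cball x (\<rho>/2))"
      using emeasure_cball_le_doubling_power[where R=r, OF sets doubling] assms(3-5) by auto
    finally show ?thesis .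
  qed
  then have "of_nat (card F) * emeasure \<mu> (cball y r) \<le> (\<Sum>x\<in>F. ennreal D ^ k * emeasure \<mu> (cball x (\<rho>/2)))"
    using sum_mono[of F "\<lambda>_. emeasure \<mu> (cball y r)"] by simp
  also have "\<dots> = ennreal D ^ k * emeasure \<mu> (\<Union>x\<in>F. cball x (\<rho>/2))"
    using sum_emeasure_separated_cballs[OF sets F(1,3)] by (simp flip: sum_distrib_left)
  also have "\<dots> \<le> ennreal D ^ k * emeasure \<mu> (cball y (r + \<rho>))"
  proof -
    have "cball x (\<rho>/2) \<subseteq> cball y (r + \<rho>)" if "x \<in> F" for x
      using F(2) that \<open>0 < \<rho>\<close> by (intro cball_subset_cball_dist) auto
    then show ?thesis by (intro mult_left_mono emeasure_mono sets) auto
  qed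
  finally show ?thesis .
qed

lemma standing_setting_separated_card_bounded:
  fixes \<mu> :: "'a::polish_space measure" and y :: 'a
  assumes ss: "standing_setting \<mu> p" and "0 < r" "0 < \<rho>"
  obtains N where "\<And>F. finite F \<Longrightarrow> F \<subseteq> cball y r \<Longrightarrow> separated \<rho> F \<Longrightarrow> card F < N"
proof -
  obtain D where doubling: "\<And>t x. t \<in> {0<..r} \<Longrightarrow> emeasure \<mu> (cball x (2*t)) \<le> ennreal D * emeasure \<mu> (cball x t)"
    using standing_setting_doubling[OF ss \<open>0 < r\<close>] by blast
  obtain k :: nat where "4*r/\<rho> < 2^k" using real_arch_pow[of 2 "4*r/\<rho>"] by auto
  then have k: "2*r \<le> 2^k * (\<rho>/2)" using \<open>0 < \<rho>\<close> by (simp add: field_simps)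
  define a where "a = emeasure \<mu> (cball y r)"
  define B where "B = ennreal D ^ k * emeasure \<mu> (cball y (r + \<rho>))"
  have a: "0 < a" "a < \<infinity>" unfolding a_def
    using standing_setting_emeasure_cball_pos[OF ss \<open>0 < r\<close>] standing_setting_emeasure_cball_finite[OF ss]
    by auto
  have "B < \<infinity>" unfolding B_def using standing_setting_emeasure_cball_finite[OF ss]
    by (simp add: ennreal_mult_less_top power_less_top_ennreal)
  with a have "B / a < \<infinity>" by (auto simp: ennreal_divide_eq_top_iff simp flip: less_top)
  then obtain N where N: "B / a < of_nat N" using ennreal_Ex_less_of_nat by (auto simp: infinity_ennreal_def)
  show thesis
  proof (rule that[of N])
    fix F assume "finite F" "F \<subseteq> cball y r" "separated \<rho> F"
    then have "of_nat (card F) * a / a \<le> B / a" unfolding a_def B_def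
      by (intro divide_right_mono_ennreal card_separated_mult_emeasure_le[OF standing_setting_cball_sets[OF ss]
            doubling \<open>0 < r\<close> \<open>0 < \<rho>\<close> k])
    then have "of_nat (card F) \<le> B / a" using a by (simp add: ennreal_mult_divide_eq)
    then have "of_nat (card F) < (of_nat N :: ennreal)" using N by (rule le_less_trans)
    then show "card F < N" by (simp add: of_nat_less_iff)
  qed
qed

lemma standing_setting_exists_separated_net:
  fixes \<mu> :: "'a::polish_space measure" and y :: 'a
  assumes ss: "standing_setting \<mu> p" and "K \<subseteq> cball y r" "0 < r" "0 < \<rho>"
  obtains F where "finite F" "F \<subseteq> K" "separated \<rho> F" "\<And>z. z \<in> K \<Longrightarrow> \<exists>x\<in>F. dist z x \<le> \<rho>"
proof -
  define P where "P F \<longleftrightarrow> finite F \<and> F \<subseteq> K \<and> separated \<rho> F" for F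
  obtain N where "\<And>F. finite F \<Longrightarrow> F \<subseteq> cball y r \<Longrightarrow> separated \<rho> F \<Longrightarrow> card F < N"
    using standing_setting_separated_card_bounded[OF ss \<open>0 < r\<close> \<open>0 < \<rho>\<close>] by blast
  then have "\<forall>F. P F \<longrightarrow> card F < N" using assms(2) unfolding P_def by blast
  moreover have "P {}" unfolding P_def separated_def by simp
  ultimately obtain F where F: "P F" and F_max: "\<And>F'. P F' \<Longrightarrow> card F' \<le> card F"
    using ex_has_greatest_nat[of P "{}" card N] by blast
  \<comment> \<open>A maximal \<rho>-separated subset is a \<rho>-net.\<close>
  have "\<exists>x\<in>F. dist z x \<le> \<rho>" if "z \<in> K" for z
  proof (rule ccontr)
    assume "\<not> (\<exists>x\<in>F. dist z x \<le> \<rho>)"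
    then have far: "\<And>x. x \<in> F \<Longrightarrow> \<rho> < dist z x" by (simp add: not_le)
    then have "z \<notin> F" using \<open>0 < \<rho>\<close> by force
    have "P (insert z F)" using F far \<open>z \<in> K\<close> unfolding P_def by (simp add: separated_insert)
    then have "card (insert z F) \<le> card F" by (rule F_max)
    then show False using \<open>z \<notin> F\<close> F unfolding P_def by simp
  qed
  then show thesis using that F unfolding P_def by blast
qed

lemma H0_delta_le_sum_cover:
  fixes \<mu> :: "'a::metric_space measure"
  assumes "finite F" "K \<subseteq> (\<Union>x\<in>F. cball x \<rho>)" "0 < \<rho>" "\<rho> < \<delta>"
  shows "H0_delta \<mu> \<delta> K \<le> (\<Sum>x\<in>F. emeasure \<mu> (cball x \<rho>))"
proof -
  obtain h where h: "bij_betw h {..<card F} F"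
    using ex_bij_betw_nat_finite[OF assms(1)] by (auto simp: atLeast0LessThan)
  then have "h ` {..<card F} = F" by (simp add: bij_betw_def)
  then have "(\<Union>i<card F. cball (h i) \<rho>) = (\<Union>x\<in>F. cball x \<rho>)" by force
  then have "H0_delta \<mu> \<delta> K \<le> (\<Sum>i. if i \<in> {..<card F} then emeasure \<mu> (cball (h i) \<rho>) else 0)"
    unfolding H0_delta_def using assms by (intro INF_lower2[of "({..<card F}, h, \<lambda>_. \<rho>)"]) auto
  also have "\<dots> = (\<Sum>i<card F. emeasure \<mu> (cball (h i) \<rho>))"
    by (subst suminf_finite[of "{..<card F}"]) auto
  also have "\<dots> = (\<Sum>x\<in>F. emeasure \<mu> (cball x \<rho>))"
    using sum.reindex_bij_betw[OF h] by simp
  finally show ?thesis .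
qed

lemma infdist_thickening_subset_cball:
  fixes K :: "'a::metric_space set"
  assumes "K \<noteq> {}" "K \<subseteq> cball y r"
  shows "{z. infdist z K \<le> e} \<subseteq> cball y (r + e)"
proof
  fix z assume "z \<in> {z. infdist z K \<le> e}"
  have "dist y z - r \<le> dist z a" if "a \<in> K" for a
    using assms(2) that dist_triangle[of y z a] by (auto simp: dist_commute)
  then have "dist y z - r \<le> infdist z K"
    unfolding infdist_def using assms(1) by (auto intro!: cINF_greatest)
  with \<open>z \<in> {z. infdist z K \<le> e}\<close> show "z \<in> cball y (r + e)" by simp
qed

lemma Inter_infdist_thickenings:
  fixes K :: "'a::metric_space set"
  assumes "closed K" "K \<noteq> {}"
  shows "(\<Inter>n. {z. infdist z K \<le> inverse (Suc n)}) = K"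
proof (intro equalityI subsetI)
  fix z assume "z \<in> (\<Inter>n. {z. infdist z K \<le> inverse (Suc n)})"
  then have "infdist z K \<le> 0"
    by (intro LIMSEQ_le_const[OF LIMSEQ_inverse_real_of_nat]) auto
  then have "z \<in> closure K" using in_closure_iff_infdist_zero[OF assms(2)] infdist_nonneg[of z K] by simp
  then show "z \<in> K" using assms(1) by simp
qed simp

lemma standing_setting_thickening_sets:
  "standing_setting \<mu> p \<Longrightarrow> {z. infdist z K \<le> e} \<in> sets \<mu>"
  by (intro standing_setting_closed_sets closed_Collect_le continuous_on_infdist continuous_intros)

lemma standing_setting_H0_delta_le_thickening:
  fixes \<mu> :: "'a::polish_space measure"
  assumes ss: "standing_setting \<mu> p"
    and doubling: "\<And>t x. t \<in> {0<..R} \<Longrightarrow> emeasure \<mu> (cball x (2*t)) \<le> ennreal D * emeasure \<mu> (cball x t)"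
    and "K \<subseteq> cball y r" "0 < r" "0 < \<rho>" "\<rho> < \<delta>" "\<rho> \<le> 2*R"
  shows "H0_delta \<mu> \<delta> K \<le> ennreal D * emeasure \<mu> {z. infdist z K \<le> \<rho>/2}"
proof -
  obtain F where F: "finite F" "F \<subseteq> K" "separated \<rho> F" and net: "\<And>z. z \<in> K \<Longrightarrow> \<exists>x\<in>F. dist z x \<le> \<rho>"
    using standing_setting_exists_separated_net[OF ss assms(3-5)] by blast
  have "K \<subseteq> (\<Union>x\<in>F. cball x \<rho>)" using net by (force simp: dist_commute)
  with F(1) have "H0_delta \<mu> \<delta> K \<le> (\<Sum>x\<in>F. emeasure \<mu> (cball x \<rho>))"
    using assms(5,6) by (rule H0_delta_le_sum_cover)
  also have "\<dots> \<le> (\<Sum>x\<in>F. ennreal D * emeasure \<mu> (cball x (\<rho>/2)))"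
    using doubling[of "\<rho>/2"] assms(5,7) by (intro sum_mono) auto
  also have "\<dots> = ennreal D * emeasure \<mu> (\<Union>x\<in>F. cball x (\<rho>/2))"
    using sum_emeasure_separated_cballs[OF standing_setting_cball_sets[OF ss] F(1,3)]
    by (simp flip: sum_distrib_left)
  also have "\<dots> \<le> ennreal D * emeasure \<mu> {z. infdist z K \<le> \<rho>/2}"
  proof (intro mult_left_mono emeasure_mono subsetI)
    fix z assume "z \<in> (\<Union>x\<in>F. cball x (\<rho>/2))"
    then obtain x where "x \<in> K" "dist x z \<le> \<rho>/2" using F(2) by auto
    then show "z \<in> {z. infdist z K \<le> \<rho>/2}" using infdist_le[of x K z] by (simp add: dist_commute)
  qed (fact standing_setting_thickening_sets[OF ss] | simp)+
  finally show ?thesis .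
qed

lemma standing_setting_emeasure_thickenings_tendsto:
  fixes \<mu> :: "'a::polish_space measure"
  assumes ss: "standing_setting \<mu> p" and K: "closed K" "K \<noteq> {}" "K \<subseteq> cball y r"
  shows "(\<lambda>n. emeasure \<mu> {z. infdist z K \<le> inverse (Suc n)}) \<longlonglongrightarrow> emeasure \<mu> K"
proof -
  define T where "T n = {z. infdist z K \<le> inverse (Suc n)}" for n
  have "T n \<subseteq> cball y (r + 1)" for n
  proof -
    have "cball y (r + inverse (Suc n)) \<subseteq> cball y (r + 1)" by (intro subset_cball) (simp add: field_simps)
    then show ?thesis unfolding T_def using infdist_thickening_subset_cball[OF K(2,3)] by blast
  qed
  then have "emeasure \<mu> (T n) \<le> emeasure \<mu> (cball y (r + 1))" for n
    by (intro emeasure_mono standing_setting_cball_sets[OF ss])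
  then have T_finite: "emeasure \<mu> (T n) \<noteq> \<infinity>" for n
    using standing_setting_emeasure_cball_finite[OF ss, of y "r + 1"]
    by (metis infinity_ennreal_def le_less_trans less_top)
  have "inverse (real (Suc (Suc n))) \<le> inverse (real (Suc n))" for n
    by (rule le_imp_inverse_le) auto
  then have "decseq T" unfolding T_def
    by (intro decseq_SucI Collect_mono impI) (rule order_trans)
  then show ?thesis
    using Lim_emeasure_decseq[of T \<mu>] standing_setting_thickening_sets[OF ss] T_finite
      Inter_infdist_thickenings[OF K(1,2)]
    unfolding T_def by auto
qed

lemma standing_setting_H0_le_emeasure:
  fixes \<mu> :: "'a::polish_space measure"
  assumes ss: "standing_setting \<mu> p" and "0 < R"
    and doubling: "\<And>t x. t \<in> {0<..R} \<Longrightarrow> emeasure \<mu> (cball x (2*t)) \<le> ennreal D * emeasure \<mu> (cball x t)"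
    and K: "closed K" "K \<noteq> {}" "K \<subseteq> cball y r" and "0 < r"
  shows "H0 \<mu> K \<le> ennreal D * emeasure \<mu> K"
  unfolding H0_def
proof (rule SUP_least)
  fix \<delta> :: real assume "\<delta> \<in> {0<..}"
  have "(\<lambda>n. ennreal D * emeasure \<mu> {z. infdist z K \<le> inverse (Suc n)}) \<longlonglongrightarrow> ennreal D * emeasure \<mu> K"
    by (intro ennreal_tendsto_cmult standing_setting_emeasure_thickenings_tendsto[OF ss K]) auto
  moreover have "\<exists>N. \<forall>n\<ge>N. H0_delta \<mu> \<delta> K \<le> ennreal D * emeasure \<mu> {z. infdist z K \<le> inverse (Suc n)}"
  proof -
    obtain N where N: "inverse (real (Suc N)) < \<delta>/2" "inverse (real (Suc N)) < R"
      using reals_Archimedean[of "min (\<delta>/2) R"] \<open>\<delta> \<in> {0<..}\<close> \<open>0 < R\<close> by auto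
    have "H0_delta \<mu> \<delta> K \<le> ennreal D * emeasure \<mu> {z. infdist z K \<le> inverse (Suc n)}" if "n \<ge> N" for n
    proof -
      have "inverse (real (Suc n)) \<le> inverse (real (Suc N))"
        using that by (intro le_imp_inverse_le) auto
      with N have "2 * inverse (real (Suc n)) < \<delta>" "2 * inverse (real (Suc n)) \<le> 2 * R" by linarith+
      from standing_setting_H0_delta_le_thickening[OF ss doubling K(3) \<open>0 < r\<close> _ this]
      show ?thesis by simp
    qed
    then show ?thesis by blast
  qed
  ultimately show "H0_delta \<mu> \<delta> K \<le> ennreal D * emeasure \<mu> K"
    by (rule LIMSEQ_le_const)
qed

lemma ADR0_lower_density:
  fixes \<mu> :: "'a::polish_space measure"
  assumes ss: "standing_setting \<mu> p" and "ADR0 \<mu> S"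
  obtains L where "L > 0"
    "\<And>y r. y \<in> S \<Longrightarrow> 0 < r \<Longrightarrow> r \<le> 1 \<Longrightarrow> emeasure \<mu> (cball y r) \<le> ennreal L * emeasure \<mu> (cball y r \<inter> S)"
proof -
  obtain k1 where "closed S" "k1 > 0"
    and lower: "\<forall>x\<in>S. \<forall>r\<in>{0<..1}. ennreal k1 * emeasure \<mu> (cball x r) \<le> H0 \<mu> (cball x r \<inter> S)"
    using assms(2) unfolding ADR0_def by blast
  obtain D where "D \<ge> 1"
    and doubling: "\<And>t x. t \<in> {0<..1} \<Longrightarrow> emeasure \<mu> (cball x (2*t)) \<le> ennreal D * emeasure \<mu> (cball x t)"
    using standing_setting_doubling[OF ss, of 1] by auto
  have "emeasure \<mu> (cball y r) \<le> ennreal (D / k1) * emeasure \<mu> (cball y r \<inter> S)"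
    if "y \<in> S" "0 < r" "r \<le> 1" for y r
  proof -
    have "ennreal k1 * emeasure \<mu> (cball y r) \<le> H0 \<mu> (cball y r \<inter> S)"
      using lower that by auto
    also have "\<dots> \<le> ennreal D * emeasure \<mu> (cball y r \<inter> S)"
    proof (rule standing_setting_H0_le_emeasure[OF ss _ doubling])
      show "cball y r \<inter> S \<noteq> {}" using that by (metis IntI centre_in_cball empty_iff less_le)
    qed (use that \<open>closed S\<close> in auto)
    finally have "ennreal (1/k1) * (ennreal k1 * emeasure \<mu> (cball y r))
        \<le> ennreal (1/k1) * (ennreal D * emeasure \<mu> (cball y r \<inter> S))"
      by (rule mult_left_mono) simp
    then show ?thesis
      using \<open>k1 > 0\<close> \<open>D \<ge> 1\<close> by (simp add: mult.assoc[symmetric] flip: ennreal_mult)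
  qed
  then show thesis using that[of "D / k1"] \<open>D \<ge> 1\<close> \<open>k1 > 0\<close> by auto
qed

lemma ADR0_lower_density_dilated:
  fixes \<mu> :: "'a::polish_space measure"
  assumes ss: "standing_setting \<mu> p" and "ADR0 \<mu> S" and "0 < \<kappa>"
  obtains \<Lambda> where "\<Lambda> > 0"
    "\<And>y r. y \<in> S \<Longrightarrow> 0 < r \<Longrightarrow> r \<le> 1 \<Longrightarrow> \<kappa> * r \<le> 2 \<Longrightarrow>
      emeasure \<mu> (cball y (\<kappa> * r)) \<le> ennreal \<Lambda> * emeasure \<mu> (cball y r \<inter> S)"
proof -
  obtain L where "L > 0" and lower: "\<And>y r. y \<in> S \<Longrightarrow> 0 < r \<Longrightarrow> r \<le> 1 \<Longrightarrow>
      emeasure \<mu> (cball y r) \<le> ennreal L * emeasure \<mu> (cball y r \<inter> S)"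
    using ADR0_lower_density[OF ss assms(2)] by blast
  obtain D where "D \<ge> 1"
    and doubling: "\<And>t x. t \<in> {0<..1} \<Longrightarrow> emeasure \<mu> (cball x (2*t)) \<le> ennreal D * emeasure \<mu> (cball x t)"
    using standing_setting_doubling[OF ss, of 1] by auto
  obtain k :: nat where "\<kappa> < 2^k" using real_arch_pow[of 2 \<kappa>] by auto
  have "emeasure \<mu> (cball y (\<kappa> * r)) \<le> ennreal (D^k * L) * emeasure \<mu> (cball y r \<inter> S)"
    if "y \<in> S" "0 < r" "r \<le> 1" "\<kappa> * r \<le> 2" for y r
  proof -
    have "\<kappa> * r \<le> 2^k * r" using \<open>\<kappa> < 2^k\<close> \<open>0 < r\<close> by simp
    then have "emeasure \<mu> (cball y (\<kappa> * r)) \<le> ennreal D ^ k * emeasure \<mu> (cball y r)"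
      using that \<open>0 < \<kappa>\<close>
      by (intro emeasure_cball_le_doubling_power[where R=1, OF standing_setting_cball_sets[OF ss] doubling]) auto
    also have "\<dots> \<le> ennreal D ^ k * (ennreal L * emeasure \<mu> (cball y r \<inter> S))"
      using lower that by (intro mult_left_mono) auto
    finally show ?thesis
      using \<open>D \<ge> 1\<close> \<open>L > 0\<close> by (simp add: ennreal_mult ennreal_power mult.assoc)
  qed
  then show thesis using that[of "D^k * L"] \<open>D \<ge> 1\<close> \<open>L > 0\<close> by auto
qed

section \<open>Packing\<close>

lemma nn_integral_split_off_indicator:
  fixes m :: ennreal
  assumes "U \<in> sets M" "g \<in> borel_measurable M" "\<And>z. z \<in> U \<Longrightarrow> m \<le> g z"
  shows "(\<integral>\<^sup>+ z. g z \<partial>M) = m * emeasure M U + (\<integral>\<^sup>+ z. g z - m * indicator U z \<partial>M)"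
proof -
  have "(\<integral>\<^sup>+ z. g z \<partial>M) = (\<integral>\<^sup>+ z. (g z - m * indicator U z) + m * indicator U z \<partial>M)"
    using assms(3) by (intro nn_integral_cong) (simp add: diff_add_cancel_ennreal split: split_indicator)
  also have "\<dots> = (\<integral>\<^sup>+ z. g z - m * indicator U z \<partial>M) + m * emeasure M U"
    using assms(1,2) by (simp add: nn_integral_add nn_integral_cmult_indicator)
  finally show ?thesis by (simp add: add.commute)
qed

lemma sum_mult_ennreal_split_min:
  fixes w :: "'i \<Rightarrow> ennreal" and t :: "'i \<Rightarrow> real"
  assumes "finite I" "i0 \<in> I" "0 \<le> t i0" "\<And>i. i \<in> I \<Longrightarrow> t i0 \<le> t i"
  shows "(\<Sum>i\<in>I. w i * ennreal (t i))
    = ennreal (t i0) * (\<Sum>i\<in>I. w i) + (\<Sum>i\<in>I - {i0}. w i * ennreal (t i - t i0))"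
proof -
  have "ennreal (t i) = ennreal (t i0) + ennreal (t i - t i0)" if "i \<in> I" for i
    using assms(3) assms(4)[OF that] by (simp flip: ennreal_plus)
  then have "(\<Sum>i\<in>I. w i * ennreal (t i))
      = ennreal (t i0) * (\<Sum>i\<in>I. w i) + (\<Sum>i\<in>I. w i * ennreal (t i - t i0))"
    by (simp add: distrib_left sum.distrib sum_distrib_left mult.commute)
  also have "(\<Sum>i\<in>I. w i * ennreal (t i - t i0)) = (\<Sum>i\<in>I - {i0}. w i * ennreal (t i - t i0))"
    using assms(1,2) by (simp add: sum.remove)
  finally show ?thesis .
qed

lemma sum_le_nn_integral_of_packing:
  fixes w :: "'i \<Rightarrow> ennreal" and t :: "'i \<Rightarrow> real"
  assumes "finite I" and sets: "\<And>i. i \<in> I \<Longrightarrow> A i \<in> sets M" and "\<And>i. i \<in> I \<Longrightarrow> 0 \<le> t i"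
    and packing: "\<And>J. J \<subseteq> I \<Longrightarrow> (\<Sum>i\<in>J. w i) \<le> Cp * emeasure M (\<Union>i\<in>J. A i)"
    and "g \<in> borel_measurable M" and "\<And>i z. i \<in> I \<Longrightarrow> z \<in> A i \<Longrightarrow> ennreal (t i) \<le> g z"
  shows "(\<Sum>i\<in>I. w i * ennreal (t i)) \<le> Cp * (\<integral>\<^sup>+ z. g z \<partial>M)"
  using assms
proof (induction I arbitrary: t g rule: finite_psubset_induct)
  case (psubset I)
  show ?case
  proof (cases "I = {}")
    case False
    obtain i0 where "i0 \<in> I" and min: "\<And>i. i \<in> I \<Longrightarrow> t i0 \<le> t i"
    proof -
      have "Min (t ` I) \<in> t ` I" using \<open>finite I\<close> False by (intro Min_in) auto
      then obtain i0 where "i0 \<in> I" "t i0 = Min (t ` I)" by auto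
      then show thesis using that[of i0] \<open>finite I\<close> by simp
    qed
    define m where "m = t i0"
    define U where "U = (\<Union>i\<in>I. A i)"
    have U: "U \<in> sets M" unfolding U_def using \<open>finite I\<close> psubset.prems by auto
    \<comment> \<open>Lower every level by the smallest one; index i0 then drops out.\<close>
    define g' where "g' z = g z - ennreal m * indicator U z" for z
    have m_le: "ennreal m \<le> g z" if z: "z \<in> U" for z
    proof -
      obtain i where "i \<in> I" "z \<in> A i" using z unfolding U_def by auto
      then show ?thesis using min psubset.prems(5) unfolding m_def by (meson ennreal_leI order_trans)
    qed
    have IH: "(\<Sum>i\<in>I - {i0}. w i * ennreal (t i - m)) \<le> Cp * (\<integral>\<^sup>+ z. g' z \<partial>M)"
    proof (rule psubset.IH)
      show "I - {i0} \<subset> I" using \<open>i0 \<in> I\<close> by auto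
      show "\<And>J. J \<subseteq> I - {i0} \<Longrightarrow> (\<Sum>i\<in>J. w i) \<le> Cp * emeasure M (\<Union>i\<in>J. A i)"
        using psubset.prems(3) by blast
      show "g' \<in> borel_measurable M" unfolding g'_def using psubset.prems U by measurable
      fix i z assume iz: "i \<in> I - {i0}" "z \<in> A i"
      have "ennreal (t i - m) = ennreal (t i) - ennreal m"
        unfolding m_def using psubset.prems(2) \<open>i0 \<in> I\<close> by (simp add: ennreal_minus)
      also have "\<dots> \<le> g z - ennreal m"
        using psubset.prems(5) iz by (intro ennreal_minus_mono) auto
      moreover have "z \<in> U" unfolding U_def using iz by auto
      ultimately show "ennreal (t i - m) \<le> g' z" unfolding g'_def by simp
    qed (use psubset.prems(1) min in \<open>auto simp: m_def\<close>)
    have "(\<Sum>i\<in>I. w i * ennreal (t i)) = ennreal m * (\<Sum>i\<in>I. w i) + (\<Sum>i\<in>I - {i0}. w i * ennreal (t i - m))"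
      unfolding m_def using \<open>finite I\<close> \<open>i0 \<in> I\<close> psubset.prems(2) min by (intro sum_mult_ennreal_split_min) auto
    also have "\<dots> \<le> ennreal m * (Cp * emeasure M U) + Cp * (\<integral>\<^sup>+ z. g' z \<partial>M)"
      unfolding U_def using psubset.prems(3) IH by (intro add_mono mult_left_mono) auto
    also have "\<dots> = Cp * (\<integral>\<^sup>+ z. g z \<partial>M)"
      unfolding g'_def using nn_integral_split_off_indicator[OF U psubset.prems(4) m_le]
      by (simp add: distrib_left mult.left_commute)
    finally show ?thesis .
  qed simp
qed

lemma sum_le_nn_integral_of_packing_ennreal:
  fixes w t :: "'i \<Rightarrow> ennreal"
  assumes "finite I" and sets: "\<And>i. i \<in> I \<Longrightarrow> A i \<in> sets M"
    and packing: "\<And>J. J \<subseteq> I \<Longrightarrow> (\<Sum>i\<in>J. w i) \<le> Cp * emeasure M (\<Union>i\<in>J. A i)"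
    and below: "\<And>i z. i \<in> I \<Longrightarrow> z \<in> A i \<Longrightarrow> t i \<le> h z"
  shows "(\<Sum>i\<in>I. w i * t i) \<le> Cp * (\<integral>\<^sup>+ z. h z \<partial>M)"
proof (cases "\<exists>i\<in>I. t i = \<infinity> \<and> w i \<noteq> 0")
  case True
  then obtain i where i: "i \<in> I" "t i = \<infinity>" "w i \<noteq> 0" by blast
  have "w i \<le> Cp * emeasure M (A i)" using packing[of "{i}"] i by simp
  then have nonzero: "Cp \<noteq> 0" "emeasure M (A i) \<noteq> 0" using i by auto
  have "\<infinity> * emeasure M (A i) = (\<integral>\<^sup>+ z. \<infinity> * indicator (A i) z \<partial>M)"
    using sets i by (simp add: nn_integral_cmult_indicator)
  also have "\<dots> \<le> (\<integral>\<^sup>+ z. h z \<partial>M)"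
    using below[OF i(1)] i by (intro nn_integral_mono) (simp split: split_indicator)
  finally show ?thesis using nonzero by (simp add: ennreal_mult_top top_unique)
next
  case False
  define g where "g z = (SUP i\<in>I. ennreal (enn2real (t i)) * indicator (A i) z)" for z
  have "(\<Sum>i\<in>I. w i * t i) = (\<Sum>i\<in>I. w i * ennreal (enn2real (t i)))"
    using False by (intro sum.cong) (auto simp: less_top)
  also have "\<dots> \<le> Cp * (\<integral>\<^sup>+ z. g z \<partial>M)"
    using assms(1) sets packing unfolding g_def
    by (intro sum_le_nn_integral_of_packing[where A=A] borel_measurable_SUP) (auto intro: SUP_upper2 countable_finite)
  also have "(\<integral>\<^sup>+ z. g z \<partial>M) \<le> (\<integral>\<^sup>+ z. h z \<partial>M)"
    unfolding g_def using below
    by (intro nn_integral_mono SUP_least) (auto simp: ennreal_enn2real_if split: split_indicator)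
  finally show ?thesis by (simp add: mult_left_mono)
qed

lemma sum_emeasure_cball_le_near_largest:
  fixes \<mu> :: "'a::metric_space measure"
  assumes sets: "\<And>x r. cball x r \<in> sets \<mu>" and "finite R" "0 \<le> c"
    and disjoint: "disjoint_family_on (\<lambda>i. cball (xs i) (rs i)) R"
    and "\<And>i. i \<in> R \<Longrightarrow> rs i \<le> r0" "\<And>i. i \<in> R \<Longrightarrow> dist (ys i) y0 \<le> rs i + r0"
    and "\<And>i. i \<in> R \<Longrightarrow> dist (xs i) (ys i) \<le> c * rs i"
  shows "(\<Sum>i\<in>R. emeasure \<mu> (cball (xs i) (rs i))) \<le> emeasure \<mu> (cball y0 ((c+3) * r0))"
proof -
  have "cball (xs i) (rs i) \<subseteq> cball y0 ((c+3) * r0)" if "i \<in> R" for i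
  proof (rule cball_subset_cball_dist)
    have "c * rs i \<le> c * r0" using assms that by (intro mult_left_mono) auto
    moreover have "dist y0 (xs i) \<le> dist y0 (ys i) + dist (ys i) (xs i)" by (rule dist_triangle)
    ultimately show "dist y0 (xs i) + rs i \<le> (c+3) * r0"
      using assms(5-7)[OF that] by (simp add: dist_commute algebra_simps)
  qed
  then have "emeasure \<mu> (\<Union>i\<in>R. cball (xs i) (rs i)) \<le> emeasure \<mu> (cball y0 ((c+3) * r0))"
    using sets by (intro emeasure_mono) auto
  then show ?thesis using sets assms(2) disjoint by (subst sum_emeasure) auto
qed

lemma sum_emeasure_cball_le_packing:
  fixes \<mu> :: "'a::metric_space measure"
  assumes sets: "\<And>x r. cball x r \<in> sets \<mu>" "S \<in> sets \<mu>" and "finite I" "0 \<le> c"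
    and "\<And>i. i \<in> I \<Longrightarrow> 0 \<le> rs i"
    and "disjoint_family_on (\<lambda>i. cball (xs i) (rs i)) I"
    and "\<And>i. i \<in> I \<Longrightarrow> dist (xs i) (ys i) \<le> c * rs i"
    and "\<And>i. i \<in> I \<Longrightarrow> emeasure \<mu> (cball (ys i) ((c+3) * rs i))
      \<le> ennreal \<Lambda> * emeasure \<mu> (cball (ys i) (rs i) \<inter> S)"
  shows "(\<Sum>i\<in>I. emeasure \<mu> (cball (xs i) (rs i))) \<le> ennreal \<Lambda> * emeasure \<mu> (\<Union>i\<in>I. cball (ys i) (rs i) \<inter> S)"
  using assms(3,5-)
proof (induction I rule: finite_psubset_induct)
  case (psubset I)
  define A where "A i = cball (ys i) (rs i) \<inter> S" for i
  have A_sets: "A i \<in> sets \<mu>" for i unfolding A_def using sets by auto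
  show ?case
  proof (cases "I = {}")
    case False
    obtain i0 where "i0 \<in> I" and i0_max: "\<And>i. i \<in> I \<Longrightarrow> rs i \<le> rs i0"
      using Max_in[of "rs ` I"] Max_ge[of "rs ` I"] \<open>finite I\<close> False by fastforce
    \<comment> \<open>Vitali selection: the largest ball absorbs every ball whose A-set might meet A i0.\<close>
    define R where "R = {i\<in>I. dist (ys i) (ys i0) \<le> rs i + rs i0}"
    have "i0 \<in> R" "R \<subseteq> I" unfolding R_def using \<open>i0 \<in> I\<close> psubset.prems(1) by auto
    have far: "(\<Sum>i\<in>I - R. emeasure \<mu> (cball (xs i) (rs i))) \<le> ennreal \<Lambda> * emeasure \<mu> (\<Union>i\<in>I - R. A i)"
      unfolding A_def using \<open>i0 \<in> R\<close> \<open>i0 \<in> I\<close> psubset.prems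
      by (intro psubset.IH) (auto intro: disjoint_family_on_mono)
    have near: "(\<Sum>i\<in>R. emeasure \<mu> (cball (xs i) (rs i))) \<le> ennreal \<Lambda> * emeasure \<mu> (A i0)"
    proof -
      have "(\<Sum>i\<in>R. emeasure \<mu> (cball (xs i) (rs i))) \<le> emeasure \<mu> (cball (ys i0) ((c+3) * rs i0))"
        using \<open>R \<subseteq> I\<close> \<open>finite I\<close> psubset.prems i0_max \<open>0 \<le> c\<close> unfolding R_def
        by (intro sum_emeasure_cball_le_near_largest[OF sets(1)]) (auto intro: disjoint_family_on_mono finite_subset)
      then show ?thesis unfolding A_def using psubset.prems(4) \<open>i0 \<in> I\<close> by (blast intro: order_trans)
    qed
    have "A i0 \<inter> A i = {}" if "i \<in> I - R" for i
    proof -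
      have "rs i0 + rs i < dist (ys i0) (ys i)" using that unfolding R_def by (auto simp: dist_commute)
      then show ?thesis unfolding A_def using disjoint_cballI by blast
    qed
    then have "A i0 \<inter> (\<Union>i\<in>I - R. A i) = {}" by blast
    have "(\<Sum>i\<in>I. emeasure \<mu> (cball (xs i) (rs i)))
        = (\<Sum>i\<in>R. emeasure \<mu> (cball (xs i) (rs i))) + (\<Sum>i\<in>I - R. emeasure \<mu> (cball (xs i) (rs i)))"
      using sum.subset_diff[OF \<open>R \<subseteq> I\<close> \<open>finite I\<close>] by (simp add: add.commute)
    also have "\<dots> \<le> ennreal \<Lambda> * emeasure \<mu> (A i0) + ennreal \<Lambda> * emeasure \<mu> (\<Union>i\<in>I - R. A i)"
      using near far by (rule add_mono)
    also have "\<dots> = ennreal \<Lambda> * emeasure \<mu> (A i0 \<union> (\<Union>i\<in>I - R. A i))"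
    proof -
      have "(\<Union>i\<in>I - R. A i) \<in> sets \<mu>" using A_sets \<open>finite I\<close> by auto
      from plus_emeasure[OF A_sets this \<open>A i0 \<inter> (\<Union>i\<in>I - R. A i) = {}\<close>]
      show ?thesis by (metis distrib_left)
    qed
    also have "\<dots> \<le> ennreal \<Lambda> * emeasure \<mu> (\<Union>i\<in>I. A i)"
      using A_sets \<open>finite I\<close> \<open>i0 \<in> I\<close> by (intro mult_left_mono emeasure_mono) auto
    finally show ?thesis unfolding A_def .
  qed simp
qed

section \<open>Nice families\<close>

lemma nice_family_centres:
  assumes "nice_family S c M xs rs"
  obtains ys where "\<And>i. i < M \<Longrightarrow> ys i \<in> S" "\<And>i. i < M \<Longrightarrow> dist (xs i) (ys i) \<le> c * rs i"
proof -
  have "\<forall>i. \<exists>y. i < M \<longrightarrow> y \<in> S \<and> dist (xs i) y \<le> c * rs i"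
    using assms unfolding nice_family_def by (auto simp: dist_commute)
  then obtain ys where "\<forall>i. i < M \<longrightarrow> ys i \<in> S \<and> dist (xs i) (ys i) \<le> c * rs i"
    using choice[of "\<lambda>i y. i < M \<longrightarrow> y \<in> S \<and> dist (xs i) y \<le> c * rs i"] by blast
  then show thesis using that by blast
qed

lemma nice_family_packing:
  fixes \<mu> :: "'a::metric_space measure"
  assumes sets: "\<And>x r. cball x r \<in> sets \<mu>" "S \<in> sets \<mu>" and "1 \<le> c"
    and nice: "nice_family S c M xs rs"
    and near: "\<And>i. i < M \<Longrightarrow> dist (xs i) (ys i) \<le> c * rs i"
    and comparable: "\<And>i. i < M \<Longrightarrow>
      emeasure \<mu> (cball (ys i) ((4*c+1) * rs i)) \<le> ennreal \<Lambda> * emeasure \<mu> (cball (ys i) (rs i) \<inter> S)"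
    and "J \<subseteq> {..<M}"
  shows "(\<Sum>i\<in>J. emeasure \<mu> (cball (xs i) (rs i))) \<le> ennreal \<Lambda> * emeasure \<mu> (\<Union>i\<in>J. cball (ys i) (rs i) \<inter> S)"
proof (rule sum_emeasure_cball_le_packing[OF sets])
  have rs: "0 < rs i" if "i < M" for i using nice that unfolding nice_family_def by auto
  show "disjoint_family_on (\<lambda>i. cball (xs i) (rs i)) J"
    using nice \<open>J \<subseteq> {..<M}\<close> unfolding nice_family_def disjoint_family_on_def by blast
  show "finite J" "0 \<le> c" using \<open>J \<subseteq> {..<M}\<close> \<open>1 \<le> c\<close> finite_subset by auto
  fix i assume "i \<in> J"
  then have i: "i < M" using \<open>J \<subseteq> {..<M}\<close> by auto
  show "0 \<le> rs i" "dist (xs i) (ys i) \<le> c * rs i" using rs[OF i] near[OF i] by auto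
  have "emeasure \<mu> (cball (ys i) ((c+3) * rs i)) \<le> emeasure \<mu> (cball (ys i) ((4*c+1) * rs i))"
    using rs[OF i] \<open>1 \<le> c\<close> sets by (intro emeasure_mono subset_cball) auto
  also have "\<dots> \<le> ennreal \<Lambda> * emeasure \<mu> (cball (ys i) (rs i) \<inter> S)"
    using comparable[OF i] .
  finally show "emeasure \<mu> (cball (ys i) ((c+3) * rs i)) \<le> ennreal \<Lambda> * emeasure \<mu> (cball (ys i) (rs i) \<inter> S)" .
qed

lemma nice_family_sum_le_nn_integral_sharp_max:
  fixes \<mu> :: "'a::polish_space measure"
  assumes ss: "standing_setting \<mu> p" and "closed S" "1 \<le> c" "0 < \<Lambda>"
    and comparable: "\<And>y r. y \<in> S \<Longrightarrow> 0 < r \<Longrightarrow> 4 * c * r \<le> 1 \<Longrightarrow>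
      emeasure \<mu> (cball y ((4*c+1) * r)) \<le> ennreal \<Lambda> * emeasure \<mu> (cball y r \<inter> S)"
    and nice: "nice_family S c M xs rs" and small: "\<forall>i<M. 4 * c * rs i \<le> 1"
  shows "(\<Sum>i<M. emeasure \<mu> (cball (xs i) (rs i)) / ennreal (rs i powr p)
            * pow_enn p (mean_osc (mrestr \<mu> S) f (cball (xs i) (2 * c * rs i))))
    \<le> ennreal ((4*c*\<Lambda>) powr p * \<Lambda>) * (\<integral>\<^sup>+ x. pow_enn p (sharp_max (mrestr \<mu> S) f x) * indicator S x \<partial>\<mu>)"
proof -
  have "0 < p" using ss unfolding standing_setting_def by auto
  have sets: "\<And>x r. cball x r \<in> sets \<mu>" "S \<in> sets \<mu>"
    using standing_setting_cball_sets[OF ss] standing_setting_closed_sets[OF ss \<open>closed S\<close>] by auto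
  have rs: "0 < rs i" "4 * c * rs i \<le> 1" "4 * c * rs i \<le> 2" if "i < M" for i
    using nice small that unfolding nice_family_def by auto
  obtain ys where ys: "\<And>i. i < M \<Longrightarrow> ys i \<in> S" "\<And>i. i < M \<Longrightarrow> dist (xs i) (ys i) \<le> c * rs i"
    using nice_family_centres[OF nice] by blast
  define A where "A i = cball (ys i) (rs i) \<inter> S" for i
  define P where "P z = pow_enn p (sharp_max (mrestr \<mu> S) f z)" for z
  have comparable_A: "emeasure \<mu> (cball (ys i) ((4*c+1) * rs i)) \<le> ennreal \<Lambda> * emeasure \<mu> (A i)"
    if "i < M" for i
    unfolding A_def using comparable ys rs that by blast
  have term_le: "emeasure \<mu> (cball (xs i) (rs i)) / ennreal (rs i powr p)
      * pow_enn p (mean_osc (mrestr \<mu> S) f (cball (xs i) (2 * c * rs i)))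
    \<le> ennreal ((4*c*\<Lambda>) powr p) * emeasure \<mu> (cball (xs i) (rs i)) * (INF z\<in>A i. P z)" if "i < M" for i
  proof -
    have "rs i \<le> (4*c+1) * rs i" using rs[OF that] \<open>1 \<le> c\<close> by simp
    from standing_setting_emeasure_Int_pos[OF ss rs(1)[OF that] this comparable_A[OF that, unfolded A_def]]
    show ?thesis
      unfolding A_def P_def using rs[OF that] ys[OF that] comparable_A[OF that, unfolded A_def] \<open>1 \<le> c\<close> \<open>0 < p\<close> \<open>0 < \<Lambda>\<close>
      by (intro ball_term_le_INF_sharp_max[OF sets] standing_setting_emeasure_cball_finite[OF ss]) auto
  qed
  have "(\<Sum>i<M. emeasure \<mu> (cball (xs i) (rs i)) / ennreal (rs i powr p)
            * pow_enn p (mean_osc (mrestr \<mu> S) f (cball (xs i) (2 * c * rs i))))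
      \<le> (\<Sum>i<M. ennreal ((4*c*\<Lambda>) powr p) * emeasure \<mu> (cball (xs i) (rs i)) * (INF z\<in>A i. P z))"
    using term_le by (intro sum_mono) auto
  also have "\<dots> = ennreal ((4*c*\<Lambda>) powr p) * (\<Sum>i<M. emeasure \<mu> (cball (xs i) (rs i)) * (INF z\<in>A i. P z))"
    by (simp add: sum_distrib_left mult.assoc)
  also have "(\<Sum>i<M. emeasure \<mu> (cball (xs i) (rs i)) * (INF z\<in>A i. P z)) \<le> ennreal \<Lambda> * (\<integral>\<^sup>+ x. P x * indicator S x \<partial>\<mu>)"
  proof (rule sum_le_nn_integral_of_packing_ennreal[where A=A])
    show "A i \<in> sets \<mu>" for i unfolding A_def using sets by auto
    show "(\<Sum>i\<in>J. emeasure \<mu> (cball (xs i) (rs i))) \<le> ennreal \<Lambda> * emeasure \<mu> (\<Union>i\<in>J. A i)"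
      if "J \<subseteq> {..<M}" for J
      unfolding A_def using nice_family_packing[OF sets \<open>1 \<le> c\<close> nice ys(2) comparable_A[unfolded A_def] that] .
    fix i z assume "z \<in> A i"
    then show "(INF z\<in>A i. P z) \<le> P z * indicator S z" unfolding A_def by (auto intro: INF_lower)
  qed simp
  finally show ?thesis
    unfolding P_def using \<open>0 < \<Lambda>\<close> by (simp add: mult_left_mono ennreal_mult mult.assoc)
qed

lemma ADR0_nice_family_estimate:
  fixes \<mu> :: "'a::polish_space measure"
  assumes ss: "standing_setting \<mu> p" and "ADR0 \<mu> S" and "1 \<le> c"
  shows "\<exists>C>0. \<forall>M xs rs f. nice_family S c M xs rs \<and> (\<forall>i<M. 4 * c * rs i \<le> 1) \<longrightarrow>
    (\<Sum>i<M. emeasure \<mu> (cball (xs i) (rs i)) / ennreal (rs i powr p)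
       * pow_enn p (mean_osc (mrestr \<mu> S) f (cball (xs i) (2 * c * rs i))))
    \<le> ennreal C * (\<integral>\<^sup>+ x. pow_enn p (sharp_max (mrestr \<mu> S) f x) * indicator S x \<partial>\<mu>)"
proof -
  obtain \<Lambda> where "\<Lambda> > 0" and dilated: "\<And>y r. y \<in> S \<Longrightarrow> 0 < r \<Longrightarrow> r \<le> 1 \<Longrightarrow> (4*c+1) * r \<le> 2 \<Longrightarrow>
      emeasure \<mu> (cball y ((4*c+1) * r)) \<le> ennreal \<Lambda> * emeasure \<mu> (cball y r \<inter> S)"
    using ADR0_lower_density_dilated[OF ss assms(2), of "4*c+1"] \<open>1 \<le> c\<close> by auto
  have comparable: "emeasure \<mu> (cball y ((4*c+1) * r)) \<le> ennreal \<Lambda> * emeasure \<mu> (cball y r \<inter> S)"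
    if "y \<in> S" "0 < r" "4 * c * r \<le> 1" for y r
  proof (rule dilated)
    have "r \<le> 4 * c * r" using that \<open>1 \<le> c\<close> by simp
    moreover have "(4*c+1) * r = 4 * c * r + r" by (simp add: algebra_simps)
    ultimately show "r \<le> 1" "(4*c+1) * r \<le> 2" using that by linarith+
  qed (use that in auto)
  have "closed S" using assms(2) unfolding ADR0_def by blast
  then show ?thesis
    using \<open>\<Lambda> > 0\<close> \<open>1 \<le> c\<close>
    by (intro exI[of _ "(4*c*\<Lambda>) powr p * \<Lambda>"] conjI allI impI
        nice_family_sum_le_nn_integral_sharp_max[OF ss _ _ _ comparable]) auto
qed

theorem lemma3p17:
  fixes \<mu> :: "'a::polish_space measure" and p :: real and S1 :: "'a set"
  assumes "standing_setting \<mu> p"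
    and "ADR0 \<mu> S1"
  shows "\<forall>c::real. c \<ge> 1 \<longrightarrow> (\<exists>C::real. C > 0 \<and>
          (\<forall>(M::nat) (xs::nat \<Rightarrow> 'a) (rs::nat \<Rightarrow> real).
             nice_family S1 c M xs rs \<and> (\<forall>i<M. 4 * c * rs i \<le> 1) \<longrightarrow>
             (\<forall>f::'a \<Rightarrow> real. loc_integrable (mrestr \<mu> S1) f \<longrightarrow>
                (\<Sum>i<M. emeasure \<mu> (cball (xs i) (rs i)) / ennreal (rs i powr p)
                         * pow_enn p (mean_osc (mrestr \<mu> S1) f (cball (xs i) (2 * c * rs i))))
                \<le> ennreal C * (\<integral>\<^sup>+ x. pow_enn p (sharp_max (mrestr \<mu> S1) f x) * indicator S1 x \<partial>\<mu>))))"
  using ADR0_nice_family_estimate[OF assms] by blast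

end
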